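(* Let $X$ be a Banach space and $T\in \mathrm{Lip}_0(X)$. Then $$\sup \operatorname{Re} W(T)=\lim_{t\to 0^+}\frac{\|I+tT\|_L-1}{t},$$ and consequently $$\omega(T)=\max_{\alpha\in \mathbb{T}}\lim_{t\to 0^+}\frac{\|I+t\alpha T\|_L-1}{t}.$$
   Context: $X$ is a Banach space over $\mathbb{K}=\mathbb{R}$ or $\mathbb{C}$; $\mathbb{T}=\{\alpha\in\mathbb{K}:|\alpha|=1\}$; $I$ is the identity map of $X$. $\mathrm{Lip}_0(X)$ is the set of Lipschitz maps $T:X\to X$ with $T(0)=0$, normed by $\|T\|_L=\sup\{\|Tx-Ty\|/\|x-y\|: x,y\in X, x\neq y\}$. For $x\in X$, $D(x)=\{x^*\in X^*: x^*(x)=\|x^*\|\|x\|=\|x\|^2\}$. The Lipschitz numerical range of $T\in\mathrm{Lip}_0(X)$ is $W(T)=\{ f(Tx-Ty)/\|x-y\|^2 : x,y\in X,\ x\neq y,\ f\in D(x-y)\}$ and its numerical radius is $\omega(T)=\sup\{|\lambda|:\lambda\in W(T)\}$. *)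

theory Defs
  imports "HOL-Analysis.Analysis"
begin

definition Lip0 :: "('a::real_normed_vector \<Rightarrow> 'a) \<Rightarrow> bool" where
  "Lip0 T \<longleftrightarrow> T 0 = 0 \<and> (\<exists>C. C-lipschitz_on UNIV T)"

definition Lip_norm :: "('a::real_normed_vector \<Rightarrow> 'a) \<Rightarrow> real" where
  "Lip_norm T = Sup {norm (T x - T y) / norm (x - y) | x y. x \<noteq> y}"

definition DR :: "'a::real_normed_vector \<Rightarrow> ('a \<Rightarrow> real) set" where
  "DR x = {f. bounded_linear f \<and> f x = onorm f * norm x \<and> onorm f * norm x = (norm x)^2}"

definition WR :: "('a::real_normed_vector \<Rightarrow> 'a) \<Rightarrow> real set" where
  "WR T = {f (T x - T y) / (norm (x - y))^2 | x y f. x \<noteq> y \<and> f \<in> DR (x - y)}"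

definition omegaR :: "('a::real_normed_vector \<Rightarrow> 'a) \<Rightarrow> real" where
  "omegaR T = Sup ((\<lambda>r. \<bar>r\<bar>) ` WR T)"

text \<open>A complex Banach space is modelled as a real Banach space together with a
  complex structure J (multiplication by i); complex scalar multiplication is
  cscale J z x = Re z x + Im z J x, and the norm is required to be complex-homogeneous.\<close>

definition cscale :: "('a::real_normed_vector \<Rightarrow> 'a) \<Rightarrow> complex \<Rightarrow> 'a \<Rightarrow> 'a" where
  "cscale J z x = Re z *\<^sub>R x + Im z *\<^sub>R J x"

definition complex_structure :: "('a::real_normed_vector \<Rightarrow> 'a) \<Rightarrow> bool" where
  "complex_structure J \<longleftrightarrow> linear J \<and> (\<forall>x. J (J x) = - x) \<and>
     (\<forall>z x. norm (cscale J z x) = cmod z * norm x)"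

definition cdual :: "('a::real_normed_vector \<Rightarrow> 'a) \<Rightarrow> ('a \<Rightarrow> complex) \<Rightarrow> bool" where
  "cdual J f \<longleftrightarrow> bounded_linear f \<and> (\<forall>x. f (J x) = \<i> * f x)"

definition DC :: "('a::real_normed_vector \<Rightarrow> 'a) \<Rightarrow> 'a \<Rightarrow> ('a \<Rightarrow> complex) set" where
  "DC J x = {f. cdual J f \<and> f x = complex_of_real (onorm f * norm x) \<and>
                onorm f * norm x = (norm x)^2}"

definition WC :: "('a::real_normed_vector \<Rightarrow> 'a) \<Rightarrow> ('a \<Rightarrow> 'a) \<Rightarrow> complex set" where
  "WC J T = {f (T x - T y) / complex_of_real ((norm (x - y))^2) | x y f.
               x \<noteq> y \<and> f \<in> DC J (x - y)}"

definition omegaC :: "('a::real_normed_vector \<Rightarrow> 'a) \<Rightarrow> ('a \<Rightarrow> 'a) \<Rightarrow> real" where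
  "omegaC J T = Sup (cmod ` WC J T)"

end

theory Submission
  imports Defs
begin

text \<open>If f is a norming functional of x - y, then
  f((x + t T x) - (y + t T y)) = \<parallel>x - y\<parallel>^2 + t f(T x - T y) \<le> \<parallel>I + t T\<parallel> \<parallel>x - y\<parallel>^2
  (Lipschitz norm), so sup W(T) is a lower bound for the difference quotient (\<parallel>I + t T\<parallel> - 1) / t.
  Conversely, let w = (x + t T x) - (y + t T y) and test a norming functional of w on the pair
  (x + t (T x - T y), y), whose difference is again w: with \<omega> = sup W(T) and L the Lipschitz
  constant of T this gives \<parallel>w\<parallel> (1 - t \<omega>) \<le> (1 + t^2 L^2) \<parallel>x - y\<parallel>, which squeezes the quotient
  to \<omega>. Norming functionals exist by the Hahn-Banach theorem (Zorn's lemma on norm-dominated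
  graphs). Over \<complex> the real parts of the complex norming functionals are exactly the real ones,
  so Re W(T) is the real numerical range. Finally W(\<alpha> T) = \<alpha> W(T), and \<alpha> \<mapsto> sup Re (\<alpha> W(T))
  is Lipschitz on the unit circle, where its maximum is the numerical radius.\<close>

lemma Lip_norm_bound:
  fixes F :: "'a::real_normed_vector \<Rightarrow> 'a"
  assumes "C-lipschitz_on UNIV F"
  shows "norm (F x - F y) \<le> Lip_norm F * norm (x - y)"
proof (cases "x = y")
  case False
  have "bdd_above {norm (F x - F y) / norm (x - y) | x y. x \<noteq> y}"
  proof (rule bdd_aboveI)
    fix r assume "r \<in> {norm (F x - F y) / norm (x - y) | x y. x \<noteq> y}"
    then obtain a b where "r = norm (F a - F b) / norm (a - b)" "a \<noteq> b" by blast
    then show "r \<le> C"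
      using lipschitz_on_normD[OF assms] by (simp add: divide_le_eq)
  qed
  then have "norm (F x - F y) / norm (x - y) \<le> Lip_norm F"
    unfolding Lip_norm_def using False by (intro cSup_upper) blast+
  then show ?thesis using False by (simp add: divide_le_eq mult.commute)
qed simp

lemma Lip_norm_le:
  fixes F :: "'a::real_normed_vector \<Rightarrow> 'a"
  assumes "\<exists>x::'a. x \<noteq> 0" and "\<And>x y. x \<noteq> y \<Longrightarrow> norm (F x - F y) \<le> B * norm (x - y)"
  shows "Lip_norm F \<le> B"
  unfolding Lip_norm_def
proof (rule cSup_least)
  obtain x :: 'a where "x \<noteq> 0" using assms(1) by blast
  then show "{norm (F x - F y) / norm (x - y) | x y. x \<noteq> y} \<noteq> {}" by blast
next
  fix r assume "r \<in> {norm (F x - F y) / norm (x - y) | x y. x \<noteq> y}"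
  then obtain a b where "r = norm (F a - F b) / norm (a - b)" "a \<noteq> b" by blast
  then show "r \<le> B" using assms(2)[of a b] by (simp add: divide_le_eq)
qed

text \<open>Graphs of norm-dominated linear functionals on subspaces. That the relation is
  single-valued need not be required: it follows from domination.\<close>

definition dominated_graph :: "('a::real_normed_vector \<times> real) set \<Rightarrow> bool" where
  "dominated_graph G \<longleftrightarrow> (0, 0) \<in> G \<and>
     (\<forall>x a y b. (x, a) \<in> G \<longrightarrow> (y, b) \<in> G \<longrightarrow> (x + y, a + b) \<in> G) \<and>
     (\<forall>x a c. (x, a) \<in> G \<longrightarrow> (c *\<^sub>R x, c * a) \<in> G) \<and>
     (\<forall>x a. (x, a) \<in> G \<longrightarrow> a \<le> norm x)"

lemma dominated_graphD:
  assumes "dominated_graph G"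
  shows dominated_graph_zero: "(0, 0) \<in> G"
    and dominated_graph_add: "(x, a) \<in> G \<Longrightarrow> (y, b) \<in> G \<Longrightarrow> (x + y, a + b) \<in> G"
    and dominated_graph_scale: "(x, a) \<in> G \<Longrightarrow> (c *\<^sub>R x, c * a) \<in> G"
    and dominated_graph_le: "(x, a) \<in> G \<Longrightarrow> a \<le> norm x"
  using assms unfolding dominated_graph_def by blast+

lemma dominated_graph_unique:
  assumes G: "dominated_graph G" and "(x, a) \<in> G" "(x, b) \<in> G"
  shows "a = b"
proof -
  have "(x + (-1) *\<^sub>R x, a + (-1) * b) \<in> G" "(x + (-1) *\<^sub>R x, b + (-1) * a) \<in> G"
    using assms by (blast intro: dominated_graph_add dominated_graph_scale)+
  then have "a - b \<le> 0" "b - a \<le> 0"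
    using dominated_graph_le[OF G] by force+
  then show ?thesis by simp
qed

lemma dominated_graph_separating_constant:
  fixes y :: "'a::real_normed_vector"
  assumes M: "dominated_graph M"
  obtains c where "\<And>x a. (x, a) \<in> M \<Longrightarrow> a - norm (x - y) \<le> c"
    and "\<And>x a. (x, a) \<in> M \<Longrightarrow> c \<le> norm (x + y) - a"
proof
  define Lo where "Lo = {a - norm (x - y) | x a. (x, a) \<in> M}"
  have sep: "a - norm (x - y) \<le> norm (z + y) - b" if "(x, a) \<in> M" "(z, b) \<in> M" for x a z b
  proof -
    have "a + b \<le> norm ((x - y) + (z + y))"
      using dominated_graph_le[OF M dominated_graph_add[OF M that]] by simp
    also have "\<dots> \<le> norm (x - y) + norm (z + y)" by (rule norm_triangle_ineq)
    finally show ?thesis by simp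
  qed
  have "Lo \<noteq> {}" using dominated_graph_zero[OF M] unfolding Lo_def by blast
  moreover have "bdd_above Lo"
    unfolding Lo_def using sep[OF _ dominated_graph_zero[OF M]] by (intro bdd_aboveI) auto
  ultimately show "a - norm (x - y) \<le> Sup Lo" "Sup Lo \<le> norm (x + y) - a"
    if "(x, a) \<in> M" for x a
    using that sep unfolding Lo_def by (auto intro!: cSup_upper cSup_least)
qed

lemma dominated_graph_adjoin_le:
  assumes M: "dominated_graph M" and "(x, a) \<in> M"
    and lo: "\<And>x a. (x, a) \<in> M \<Longrightarrow> a - norm (x - y) \<le> c"
    and up: "\<And>x a. (x, a) \<in> M \<Longrightarrow> c \<le> norm (x + y) - a"
  shows "a + t * c \<le> norm (x + t *\<^sub>R y)"
proof (cases t "0::real" rule: linorder_cases)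
  case equal
  then show ?thesis using dominated_graph_le[OF M \<open>(x, a) \<in> M\<close>] by simp
next
  case greater
  have "c \<le> norm ((1/t) *\<^sub>R x + y) - (1/t) * a"
    by (rule up[OF dominated_graph_scale[OF M \<open>(x, a) \<in> M\<close>]])
  then have "t * c \<le> t * norm ((1/t) *\<^sub>R x + y) - a"
    using greater by (simp add: field_simps)
  moreover have "x + t *\<^sub>R y = t *\<^sub>R ((1/t) *\<^sub>R x + y)"
    using greater by (simp add: algebra_simps)
  ultimately show ?thesis
    using greater by simp
next
  case less
  define s where "s = - t"
  have s: "0 < s" using less by (simp add: s_def)
  have "(1/s) * a - norm ((1/s) *\<^sub>R x - y) \<le> c"
    by (rule lo[OF dominated_graph_scale[OF M \<open>(x, a) \<in> M\<close>]])
  then have "a - s * norm ((1/s) *\<^sub>R x - y) \<le> s * c"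
    using s by (simp add: field_simps)
  moreover have "x + t *\<^sub>R y = s *\<^sub>R ((1/s) *\<^sub>R x - y)"
    using s by (simp add: s_def algebra_simps)
  ultimately show ?thesis
    using s by (simp add: s_def)
qed

lemma dominated_graph_adjoin:
  assumes M: "dominated_graph M"
    and lo: "\<And>x a. (x, a) \<in> M \<Longrightarrow> a - norm (x - y) \<le> c"
    and up: "\<And>x a. (x, a) \<in> M \<Longrightarrow> c \<le> norm (x + y) - a"
  shows "dominated_graph {(x + t *\<^sub>R y, a + t * c) | x a t. (x, a) \<in> M}"
    (is "dominated_graph ?M'")
  unfolding dominated_graph_def
proof (intro conjI allI impI)
  show "(0, 0) \<in> ?M'"
    using dominated_graph_zero[OF M] by (auto intro!: exI[of _ 0])
next
  fix x a z b assume "(x, a) \<in> ?M'" "(z, b) \<in> ?M'"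
  then obtain x1 a1 t1 x2 a2 t2 where "(x1, a1) \<in> M" "(x2, a2) \<in> M"
    and "x = x1 + t1 *\<^sub>R y" "a = a1 + t1 * c" "z = x2 + t2 *\<^sub>R y" "b = a2 + t2 * c"
    by blast
  moreover have "x1 + t1 *\<^sub>R y + (x2 + t2 *\<^sub>R y) = (x1 + x2) + (t1 + t2) *\<^sub>R y"
    "a1 + t1 * c + (a2 + t2 * c) = (a1 + a2) + (t1 + t2) * c"
    by (simp_all add: algebra_simps)
  ultimately show "(x + z, a + b) \<in> ?M'"
    using dominated_graph_add[OF M] by blast
next
  fix x a s assume "(x, a) \<in> ?M'"
  then obtain x1 a1 t where "(x1, a1) \<in> M" "x = x1 + t *\<^sub>R y" "a = a1 + t * c"
    by blast
  moreover have "s *\<^sub>R (x1 + t *\<^sub>R y) = s *\<^sub>R x1 + (s * t) *\<^sub>R y"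
    "s * (a1 + t * c) = s * a1 + (s * t) * c"
    by (simp_all add: algebra_simps)
  ultimately show "(s *\<^sub>R x, s * a) \<in> ?M'"
    using dominated_graph_scale[OF M] by blast
next
  fix x a assume "(x, a) \<in> ?M'"
  then show "a \<le> norm x"
    using dominated_graph_adjoin_le[OF M _ lo up] by blast
qed

lemma dominated_graph_extend:
  assumes M: "dominated_graph M"
  obtains M' c where "dominated_graph M'" "M \<subseteq> M'" "(y, c) \<in> M'"
proof -
  obtain c where lo: "\<And>x a. (x, a) \<in> M \<Longrightarrow> a - norm (x - y) \<le> c"
    and up: "\<And>x a. (x, a) \<in> M \<Longrightarrow> c \<le> norm (x + y) - a"
    using dominated_graph_separating_constant[OF M] by blast
  let ?M' = "{(x + t *\<^sub>R y, a + t * c) | x a t. (x, a) \<in> M}"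
  have "(x, a) \<in> ?M'" if "(x, a) \<in> M" for x a
  proof -
    have "(x + 0 *\<^sub>R y, a + 0 * c) \<in> ?M'" using that by blast
    then show ?thesis by simp
  qed
  then have "M \<subseteq> ?M'" by auto
  moreover have "(0 + 1 *\<^sub>R y, 0 + 1 * c) \<in> ?M'"
    using dominated_graph_zero[OF M] by blast
  ultimately show ?thesis
    using that[OF dominated_graph_adjoin[OF M lo up]] by simp
qed

lemma dominated_graph_chain_Union:
  assumes "C \<in> chains {G. dominated_graph G}" "C \<noteq> {}"
  shows "dominated_graph (\<Union>C)"
proof -
  have dom: "\<And>G. G \<in> C \<Longrightarrow> dominated_graph G"
    and chain: "\<And>G H. G \<in> C \<Longrightarrow> H \<in> C \<Longrightarrow> G \<subseteq> H \<or> H \<subseteq> G"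
    using assms(1) unfolding chains_def chain_subset_def by blast+
  have add: "(x + z, a + b) \<in> \<Union>C" if xa: "(x, a) \<in> \<Union>C" and zb: "(z, b) \<in> \<Union>C" for x a z b
  proof -
    obtain G H where "G \<in> C" "H \<in> C" "(x, a) \<in> G" "(z, b) \<in> H"
      using xa zb by blast
    then show ?thesis
      using chain[of G H] dominated_graph_add[OF dom[of G]] dominated_graph_add[OF dom[of H]]
      by blast
  qed
  obtain G where "G \<in> C" using assms(2) by blast
  then have "(0, 0) \<in> \<Union>C" using dominated_graph_zero[OF dom] by blast
  moreover have "(c *\<^sub>R x, c * a) \<in> \<Union>C" "a \<le> norm x" if "(x, a) \<in> \<Union>C" for x a c
    using that dominated_graph_scale[OF dom] dominated_graph_le[OF dom] by blast+
  ultimately show ?thesis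
    unfolding dominated_graph_def using add by blast
qed

theorem Hahn_Banach_norm_dominated:
  fixes G :: "('a::real_normed_vector \<times> real) set"
  assumes "dominated_graph G"
  obtains f where "linear f" "\<And>x a. (x, a) \<in> G \<Longrightarrow> f x = a" "\<And>z. f z \<le> norm z"
proof -
  let ?A = "{M. dominated_graph M \<and> G \<subseteq> M}"
  have "\<exists>M\<in>?A. \<forall>X\<in>?A. M \<subseteq> X \<longrightarrow> X = M"
  proof (rule Zorn_Lemma2, intro ballI)
    fix C assume C: "C \<in> chains ?A"
    show "\<exists>U\<in>?A. \<forall>X\<in>C. X \<subseteq> U"
    proof (cases "C = {}")
      case False
      have "C \<in> chains {M. dominated_graph M}"
        using C unfolding chains_def by auto
      then have "dominated_graph (\<Union>C)"
        using False by (rule dominated_graph_chain_Union)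
      moreover have "G \<subseteq> \<Union>C"
        using C False unfolding chains_def by auto
      ultimately show ?thesis by blast
    qed (use assms in blast)
  qed
  then obtain M where "M \<in> ?A" and max: "\<And>X. X \<in> ?A \<Longrightarrow> M \<subseteq> X \<Longrightarrow> X = M"
    by auto
  then have M: "dominated_graph M" "G \<subseteq> M" by auto
  have total: "\<exists>a. (x, a) \<in> M" for x
  proof -
    obtain M' c where "dominated_graph M'" "M \<subseteq> M'" "(x, c) \<in> M'"
      by (rule dominated_graph_extend[OF M(1)])
    then have "M' = M" using M(2) by (intro max) auto
    then show ?thesis using \<open>(x, c) \<in> M'\<close> by blast
  qed
  define f where "f x = (THE a. (x, a) \<in> M)" for x
  have graph: "f x = a" if xa: "(x, a) \<in> M" for x a
    unfolding f_def
  proof (rule the_equality)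
    show "b = a" if "(x, b) \<in> M" for b
      using dominated_graph_unique[OF M(1) that xa] .
  qed (fact xa)
  have in_graph: "(x, f x) \<in> M" for x
    using total graph by blast
  have "linear f"
  proof (rule linearI)
    show "f (x + y) = f x + f y" for x y
      by (rule graph[OF dominated_graph_add[OF M(1) in_graph in_graph]])
    show "f (c *\<^sub>R x) = c *\<^sub>R f x" for c x
      using graph[OF dominated_graph_scale[OF M(1) in_graph]] by simp
  qed
  moreover have "f x = a" if "(x, a) \<in> G" for x a
    using graph M(2) that by blast
  moreover have "f z \<le> norm z" for z
    using dominated_graph_le[OF M(1) in_graph] .
  ultimately show ?thesis by (rule that)
qed

lemma dominated_graph_line:
  fixes w :: "'a::real_normed_vector"
  shows "dominated_graph (range (\<lambda>c. (c *\<^sub>R w, c * norm w)))" (is "dominated_graph ?G")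
  unfolding dominated_graph_def
proof (intro conjI allI impI)
  show "(0, 0) \<in> ?G"
    by (rule range_eqI[of _ _ 0]) simp
next
  fix x a z b assume "(x, a) \<in> ?G" "(z, b) \<in> ?G"
  then obtain c d where "x = c *\<^sub>R w" "a = c * norm w" "z = d *\<^sub>R w" "b = d * norm w"
    by blast
  then show "(x + z, a + b) \<in> ?G"
    by (intro range_eqI[of _ _ "c + d"]) (simp add: algebra_simps)
next
  fix x a s assume "(x, a) \<in> ?G"
  then obtain c where "x = c *\<^sub>R w" "a = c * norm w" by blast
  then show "(s *\<^sub>R x, s * a) \<in> ?G"
    by (intro range_eqI[of _ _ "s * c"]) simp
next
  fix x a assume "(x, a) \<in> ?G"
  then show "a \<le> norm x" by (auto simp: mult_right_mono)
qed

corollary norming_functional_exists: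
  fixes w :: "'a::real_normed_vector"
  obtains f where "linear f" "f w = norm w" "\<And>z. \<bar>f z\<bar> \<le> norm z"
proof -
  obtain f where f: "linear f"
    and graph: "\<And>x a. (x, a) \<in> range (\<lambda>c. (c *\<^sub>R w, c * norm w)) \<Longrightarrow> f x = a"
    and f_le: "\<And>z. f z \<le> norm z"
    by (rule Hahn_Banach_norm_dominated[OF dominated_graph_line]) blast
  have "f (1 *\<^sub>R w) = 1 * norm w"
    by (rule graph) blast
  moreover have "\<bar>f z\<bar> \<le> norm z" for z
    using f_le[of z] f_le[of "- z"] linear_neg[OF f, of z] by (simp add: abs_le_iff)
  ultimately show ?thesis using that f by simp
qed

lemma DR_properties:
  fixes w :: "'a::real_normed_vector"
  assumes "w \<noteq> 0" "f \<in> DR w"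
  shows DR_linear: "linear f" and DR_apply_self: "f w = (norm w)^2"
    and DR_abs_le: "\<bar>f z\<bar> \<le> norm w * norm z"
proof -
  have bl: "bounded_linear f" and "f w = onorm f * norm w" "onorm f * norm w = (norm w)^2"
    using assms(2) unfolding DR_def by blast+
  moreover have "onorm f = norm w"
    using calculation(3) assms(1) by (simp add: power2_eq_square)
  ultimately show "linear f" "f w = (norm w)^2" "\<bar>f z\<bar> \<le> norm w * norm z"
    using onorm[OF bl, of z] bounded_linear.linear by auto
qed

lemma DR_le: "w \<noteq> 0 \<Longrightarrow> f \<in> DR w \<Longrightarrow> f z \<le> norm w * norm z"
  using DR_abs_le abs_le_D1 by blast

lemma DR_I:
  fixes w :: "'a::real_normed_vector"
  assumes lin: "linear f" and self: "f w = (norm w)^2" and le: "\<And>z. f z \<le> norm w * norm z"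
  shows "f \<in> DR w"
proof -
  have abs_le: "\<bar>f z\<bar> \<le> norm w * norm z" for z
    using le[of z] le[of "- z"] linear_neg[OF lin, of z] by (simp add: abs_le_iff)
  have bl: "bounded_linear f"
    using lin abs_le by (intro bounded_linear_intro[where K = "norm w"])
      (auto simp: linear_add linear_scale mult.commute)
  have "onorm f \<le> norm w"
    using abs_le by (intro onorm_bound) auto
  then have "onorm f * norm w \<le> (norm w)^2"
    by (simp add: power2_eq_square mult_right_mono)
  moreover have "(norm w)^2 \<le> onorm f * norm w"
    using onorm[OF bl, of w] self by simp
  ultimately show ?thesis
    unfolding DR_def using bl self by simp
qed

lemma DR_nonempty: "\<exists>f. f \<in> DR w"
proof -
  obtain g where g: "linear g" "g w = norm w" "\<And>z. \<bar>g z\<bar> \<le> norm z"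
    using norming_functional_exists[of w] by blast
  have "(\<lambda>z. norm w * g z) \<in> DR w"
  proof (rule DR_I)
    show "linear (\<lambda>z. norm w * g z)"
      using g(1) by (simp add: linear_iff algebra_simps)
    show "norm w * g z \<le> norm w * norm z" for z
      using g(3)[of z] by (intro mult_left_mono) auto
  qed (simp add: g(2) power2_eq_square)
  then show ?thesis by blast
qed

lemma WR_nonempty:
  assumes "\<exists>x::'a. x \<noteq> 0"
  shows "WR (T :: 'a::real_normed_vector \<Rightarrow> 'a) \<noteq> {}"
proof -
  obtain x :: 'a where "x \<noteq> 0" using assms by blast
  moreover obtain f where "f \<in> DR (x - 0)" using DR_nonempty by blast
  ultimately show ?thesis unfolding WR_def by blast
qed

lemma WR_abs_le:
  fixes T :: "'a::real_normed_vector \<Rightarrow> 'a"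
  assumes L: "L-lipschitz_on UNIV T" and "r \<in> WR T"
  shows "\<bar>r\<bar> \<le> L"
proof -
  obtain x y f where r: "r = f (T x - T y) / (norm (x - y))^2" "x \<noteq> y" "f \<in> DR (x - y)"
    using assms(2) unfolding WR_def by blast
  have "x - y \<noteq> 0" using r(2) by simp
  have "\<bar>f (T x - T y)\<bar> \<le> norm (x - y) * norm (T x - T y)"
    using DR_abs_le[OF \<open>x - y \<noteq> 0\<close> r(3)] .
  also have "\<dots> \<le> norm (x - y) * (L * norm (x - y))"
    using lipschitz_on_normD[OF L] by (intro mult_left_mono) auto
  finally show ?thesis
    using r(1,2) by (simp add: abs_divide divide_le_eq power2_eq_square mult_ac)
qed

lemma Sup_WR_le_difference_quotient:
  fixes T :: "'a::real_normed_vector \<Rightarrow> 'a"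
  assumes L: "L-lipschitz_on UNIV T" and nz: "\<exists>x::'a. x \<noteq> 0" and h: "0 < h"
  shows "Sup (WR T) \<le> (Lip_norm (\<lambda>x. x + h *\<^sub>R T x) - 1) / h"
proof (rule cSup_least)
  show "WR T \<noteq> {}" by (rule WR_nonempty[OF nz])
next
  fix r assume "r \<in> WR T"
  then obtain x y f where r: "r = f (T x - T y) / (norm (x - y))^2" "x \<noteq> y" "f \<in> DR (x - y)"
    unfolding WR_def by blast
  have xy: "x - y \<noteq> 0" using r(2) by simp
  have lin: "linear f" using DR_linear[OF xy r(3)] .
  have lip: "(1 + \<bar>h\<bar> * L)-lipschitz_on UNIV (\<lambda>x. x + h *\<^sub>R T x)"
    by (intro lipschitz_on_add lipschitz_on_id lipschitz_on_cmult L)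
  have diff: "(x + h *\<^sub>R T x) - (y + h *\<^sub>R T y) = (x - y) + h *\<^sub>R (T x - T y)"
    by (simp add: algebra_simps)
  have "f ((x + h *\<^sub>R T x) - (y + h *\<^sub>R T y)) = f (x - y) + h * f (T x - T y)"
    unfolding diff linear_add[OF lin] linear_scale[OF lin] by simp
  then have "(norm (x - y))^2 + h * f (T x - T y) = f ((x + h *\<^sub>R T x) - (y + h *\<^sub>R T y))"
    using DR_apply_self[OF xy r(3)] by simp
  also have "\<dots> \<le> norm (x - y) * norm ((x + h *\<^sub>R T x) - (y + h *\<^sub>R T y))"
    using DR_le[OF xy r(3)] .
  also have "\<dots> \<le> norm (x - y) * (Lip_norm (\<lambda>x. x + h *\<^sub>R T x) * norm (x - y))"
    by (intro mult_left_mono Lip_norm_bound[OF lip]) simp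
  finally have "h * f (T x - T y) \<le> (Lip_norm (\<lambda>x. x + h *\<^sub>R T x) - 1) * (norm (x - y))^2"
    by (simp add: power2_eq_square algebra_simps)
  moreover have "0 < (norm (x - y))^2" using r(2) by simp
  ultimately have "h * r \<le> Lip_norm (\<lambda>x. x + h *\<^sub>R T x) - 1"
    unfolding r(1) by (simp add: divide_le_eq)
  then show "r \<le> (Lip_norm (\<lambda>x. x + h *\<^sub>R T x) - 1) / h"
    using h by (simp add: le_divide_eq mult.commute)
qed

lemma norm_shift_diff_le:
  fixes T :: "'a::real_normed_vector \<Rightarrow> 'a" and x y :: 'a
  assumes L: "L-lipschitz_on UNIV T" and \<omega>: "\<And>r. r \<in> WR T \<Longrightarrow> r \<le> \<omega>" and h: "0 \<le> h"
  defines "w \<equiv> (x + h *\<^sub>R T x) - (y + h *\<^sub>R T y)"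
  shows "norm w \<le> norm (x - y) + h * \<omega> * norm w + h^2 * L^2 * norm (x - y)"
proof (cases "w = 0")
  case False
  define u v where "u = x - y" and "v = T x - T y"
  \<comment> \<open>the pair (x', y) has difference w, so f (T x' - T y) is controlled by \<omega>,
    while T x - T x' is of order h\<close>
  define x' where "x' = x + h *\<^sub>R v"
  have w: "w = u + h *\<^sub>R v" "x' - y = w"
    unfolding w_def u_def v_def x'_def by (simp_all add: algebra_simps)
  obtain f where f: "f \<in> DR w" using DR_nonempty by blast
  have lin: "linear f" using DR_linear[OF False f] .
  have "f (T x' - T y) / (norm w)^2 \<in> WR T"
    unfolding WR_def using f False w(2) by force
  then have A: "f (T x' - T y) \<le> \<omega> * (norm w)^2"
    using \<omega>[OF \<open>_ \<in> WR T\<close>] False by (simp add: divide_le_eq)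
  have "f (T x - T x') \<le> norm w * norm (T x - T x')"
    using DR_le[OF False f] .
  also have "\<dots> \<le> norm w * (L * (h * (L * norm u)))"
  proof (intro mult_left_mono)
    have "norm (T x - T x') \<le> L * norm (x - x')" by (rule lipschitz_on_normD[OF L]) auto
    also have "norm (x - x') = h * norm v" unfolding x'_def using h by simp
    also have "norm v \<le> L * norm u" unfolding u_def v_def by (rule lipschitz_on_normD[OF L]) auto
    finally show "norm (T x - T x') \<le> L * (h * (L * norm u))"
      using h lipschitz_on_nonneg[OF L] by (simp add: mult_left_mono)
  qed simp
  finally have B: "f (T x - T x') \<le> h * L^2 * norm u * norm w"
    by (simp add: power2_eq_square algebra_simps)
  have "f v = f (T x' - T y) + f (T x - T x')"
    using linear_add[OF lin, of "T x' - T y" "T x - T x'"] by (simp add: v_def)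
  then have "(norm w)^2 = f u + h * (f (T x' - T y) + f (T x - T x'))"
    using DR_apply_self[OF False f] unfolding w(1)
    by (simp add: linear_add[OF lin] linear_scale[OF lin])
  also have "\<dots> \<le> norm w * norm u + h * (\<omega> * (norm w)^2 + h * L^2 * norm u * norm w)"
    using DR_le[OF False f, of u] A B h by (intro add_mono mult_left_mono) auto
  finally have "norm w * norm w \<le> norm w * (norm u + h * \<omega> * norm w + h^2 * L^2 * norm u)"
    by (simp add: power2_eq_square algebra_simps)
  then show ?thesis using False unfolding u_def by simp
qed (use h in simp)

lemma Lip_norm_shift_le:
  fixes T :: "'a::real_normed_vector \<Rightarrow> 'a"
  assumes L: "L-lipschitz_on UNIV T" and nz: "\<exists>x::'a. x \<noteq> 0"
    and \<omega>: "\<And>r. r \<in> WR T \<Longrightarrow> r \<le> \<omega>" and h: "0 \<le> h" "h * \<omega> < 1"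
  shows "Lip_norm (\<lambda>x. x + h *\<^sub>R T x) \<le> (1 + h^2 * L^2) / (1 - h * \<omega>)"
proof (rule Lip_norm_le[OF nz])
  fix x y :: 'a
  have "norm ((x + h *\<^sub>R T x) - (y + h *\<^sub>R T y)) * (1 - h * \<omega>) \<le> (1 + h^2 * L^2) * norm (x - y)"
    using norm_shift_diff_le[OF L \<omega> h(1), of x y] by (simp add: algebra_simps)
  then show "norm ((x + h *\<^sub>R T x) - (y + h *\<^sub>R T y)) \<le> (1 + h^2 * L^2) / (1 - h * \<omega>) * norm (x - y)"
    using h(2) by (simp add: field_simps)
qed

theorem tendsto_Lip_norm_quotient_Sup_WR:
  fixes T :: "'a::real_normed_vector \<Rightarrow> 'a"
  assumes L: "L-lipschitz_on UNIV T" and nz: "\<exists>x::'a. x \<noteq> 0"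
  shows "((\<lambda>t. (Lip_norm (\<lambda>x. x + t *\<^sub>R T x) - 1) / t) \<longlongrightarrow> Sup (WR T)) (at_right 0)"
proof -
  define \<omega> where "\<omega> = Sup (WR T)"
  have bdd: "bdd_above (WR T)"
    using WR_abs_le[OF L] by (intro bdd_aboveI[of _ L]) (auto simp: abs_le_iff)
  have \<omega>_upper: "r \<le> \<omega>" if "r \<in> WR T" for r
    unfolding \<omega>_def using cSup_upper[OF that bdd] .
  have "\<omega> \<le> L"
    unfolding \<omega>_def using WR_nonempty[OF nz] WR_abs_le[OF L] by (intro cSup_least) (auto simp: abs_le_iff)
  have L0: "0 \<le> L" using lipschitz_on_nonneg[OF L] .
  have small: "\<forall>\<^sub>F h in at_right 0. 0 < h \<and> h * (L + 1) < 1"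
    unfolding eventually_at_right_field
    using L0 by (intro exI[of _ "1 / (L + 1)"]) (auto simp: field_simps)
  have upper: "(Lip_norm (\<lambda>x. x + h *\<^sub>R T x) - 1) / h \<le> (h * L^2 + \<omega>) / (1 - h * \<omega>)"
    if h: "0 < h" "h * (L + 1) < 1" for h
  proof -
    have "h * \<omega> \<le> h * L" using \<open>\<omega> \<le> L\<close> h by simp
    moreover have "h * L + h < 1" using h by (simp add: algebra_simps)
    ultimately have h\<omega>: "h * \<omega> < 1" using h by linarith
    have "Lip_norm (\<lambda>x. x + h *\<^sub>R T x) - 1 \<le> (1 + h^2 * L^2) / (1 - h * \<omega>) - 1"
      using Lip_norm_shift_le[OF L nz \<omega>_upper _ h\<omega>] h by simp
    also have "\<dots> = h * ((h * L^2 + \<omega>) / (1 - h * \<omega>))"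
      using h\<omega> by (simp add: divide_simps power2_eq_square algebra_simps)
    finally show ?thesis
      using h by (simp add: divide_le_eq mult.commute)
  qed
  have "((\<lambda>h. (h * L^2 + \<omega>) / (1 - h * \<omega>)) \<longlongrightarrow> (0 * L^2 + \<omega>) / (1 - 0 * \<omega>)) (at_right 0)"
    by (intro tendsto_intros) auto
  then have lim: "((\<lambda>h. (h * L^2 + \<omega>) / (1 - h * \<omega>)) \<longlongrightarrow> \<omega>) (at_right 0)"
    by simp
  have "\<forall>\<^sub>F h in at_right 0. \<omega> \<le> (Lip_norm (\<lambda>x. x + h *\<^sub>R T x) - 1) / h"
    using small by eventually_elim (simp add: \<omega>_def Sup_WR_le_difference_quotient[OF L nz])
  moreover have "\<forall>\<^sub>F h in at_right 0. (Lip_norm (\<lambda>x. x + h *\<^sub>R T x) - 1) / h \<le> (h * L^2 + \<omega>) / (1 - h * \<omega>)"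
    using small by eventually_elim (simp add: upper)
  ultimately show ?thesis
    unfolding \<omega>_def[symmetric] by (rule tendsto_sandwich[OF _ _ tendsto_const lim])
qed

lemma WR_scaleR:
  fixes T :: "'a::real_normed_vector \<Rightarrow> 'a"
  shows "WR (\<lambda>x. \<alpha> *\<^sub>R T x) = (\<lambda>r. \<alpha> * r) ` WR T"
proof -
  have scale: "f (\<alpha> *\<^sub>R T x - \<alpha> *\<^sub>R T y) = \<alpha> * f (T x - T y)"
    if "x \<noteq> y" "f \<in> DR (x - y)" for x y f
    using DR_linear[of "x - y" f] that
    by (simp add: linear_scale flip: scaleR_diff_right)
  show ?thesis
  proof (intro set_eqI iffI)
    fix s assume "s \<in> WR (\<lambda>x. \<alpha> *\<^sub>R T x)"
    then obtain x y f where s: "s = f (\<alpha> *\<^sub>R T x - \<alpha> *\<^sub>R T y) / (norm (x - y))^2"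
      and xyf: "x \<noteq> y" "f \<in> DR (x - y)"
      unfolding WR_def by blast
    then have "f (T x - T y) / (norm (x - y))^2 \<in> WR T"
      unfolding WR_def by blast
    then show "s \<in> (\<lambda>r. \<alpha> * r) ` WR T"
      unfolding s scale[OF xyf] by force
  next
    fix s assume "s \<in> (\<lambda>r. \<alpha> * r) ` WR T"
    then obtain x y f where s: "s = \<alpha> * (f (T x - T y) / (norm (x - y))^2)"
      and xyf: "x \<noteq> y" "f \<in> DR (x - y)"
      unfolding WR_def by blast
    then have "s = f (\<alpha> *\<^sub>R T x - \<alpha> *\<^sub>R T y) / (norm (x - y))^2"
      using scale[OF xyf] by simp
    then show "s \<in> WR (\<lambda>x. \<alpha> *\<^sub>R T x)"
      unfolding WR_def using xyf by blast
  qed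
qed

lemma Sup_reflections_le_Sup_abs:
  fixes W :: "real set"
  assumes "W \<noteq> {}" "bdd_above (abs ` W)" "\<bar>\<alpha>\<bar> = 1"
  shows "Sup ((\<lambda>r. \<alpha> * r) ` W) \<le> Sup (abs ` W)"
proof (rule cSup_least)
  fix s assume "s \<in> (\<lambda>r. \<alpha> * r) ` W"
  then obtain r where "r \<in> W" "s = \<alpha> * r" by blast
  have "s \<le> \<bar>\<alpha> * r\<bar>" using \<open>s = \<alpha> * r\<close> by simp
  also have "\<dots> = \<bar>r\<bar>" using assms(3) by (simp add: abs_mult)
  also have "\<dots> \<le> Sup (abs ` W)" using \<open>r \<in> W\<close> assms(2) by (auto intro: cSup_upper)
  finally show "s \<le> Sup (abs ` W)" .
qed (use assms in blast)

lemma Sup_abs_attained_by_reflection: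
  fixes W :: "real set"
  assumes "W \<noteq> {}" "bdd_above (abs ` W)"
  shows "\<exists>\<alpha>. \<bar>\<alpha>\<bar> = 1 \<and> Sup ((\<lambda>r. \<alpha> * r) ` W) = Sup (abs ` W)"
proof -
  let ?g = "\<lambda>\<alpha>. Sup ((\<lambda>r. \<alpha> * r) ` W)"
  have bdd: "bdd_above ((\<lambda>r. \<alpha> * r) ` W)" if "\<bar>\<alpha>\<bar> = 1" for \<alpha>
  proof -
    obtain B where B: "\<And>r. r \<in> W \<Longrightarrow> \<bar>r\<bar> \<le> B"
      using assms(2) by (auto simp: bdd_above_def)
    show ?thesis
    proof (rule bdd_aboveI[of _ B])
      fix s assume "s \<in> (\<lambda>r. \<alpha> * r) ` W"
      then obtain r where "r \<in> W" "s = \<alpha> * r" by blast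
      then show "s \<le> B"
        using B[OF \<open>r \<in> W\<close>] abs_ge_self[of "\<alpha> * r"] that by (simp add: abs_mult)
    qed
  qed
  have "Sup (abs ` W) \<le> max (?g 1) (?g (-1))"
  proof (rule cSup_least)
    fix s assume "s \<in> abs ` W"
    then obtain r where "r \<in> W" "s = \<bar>r\<bar>" by blast
    have "1 * r \<le> ?g 1" "(-1) * r \<le> ?g (-1)"
      by (rule cSup_upper[OF imageI[OF \<open>r \<in> W\<close>] bdd], simp)+
    then show "s \<le> max (?g 1) (?g (-1))" using \<open>s = \<bar>r\<bar>\<close> by linarith
  qed (use assms in blast)
  moreover have "?g 1 \<le> Sup (abs ` W)" "?g (-1) \<le> Sup (abs ` W)"
    by (rule Sup_reflections_le_Sup_abs[OF assms], simp)+
  ultimately consider "?g 1 = Sup (abs ` W)" | "?g (-1) = Sup (abs ` W)"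
    by linarith
  then show ?thesis
    by cases (rule exI, erule conjI[rotated], simp)+
qed

lemma Re_rotation_le_Sup:
  fixes W :: "complex set"
  assumes "bdd_above (cmod ` W)" "z \<in> W"
  shows "Re (\<alpha> * z) \<le> Sup (Re ` (\<lambda>z. \<alpha> * z) ` W)"
proof -
  obtain B where B: "\<And>z. z \<in> W \<Longrightarrow> cmod z \<le> B"
    using assms(1) by (auto simp: bdd_above_def)
  have bdd: "bdd_above (Re ` (\<lambda>z. \<alpha> * z) ` W)"
  proof (rule bdd_aboveI[of _ "cmod \<alpha> * B"])
    fix r assume "r \<in> Re ` (\<lambda>z. \<alpha> * z) ` W"
    then obtain z where "z \<in> W" "r = Re (\<alpha> * z)" by blast
    then have "r \<le> cmod \<alpha> * cmod z" using complex_Re_le_cmod[of "\<alpha> * z"] by (simp add: norm_mult)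
    also have "\<dots> \<le> cmod \<alpha> * B" using B[OF \<open>z \<in> W\<close>] by (simp add: mult_left_mono)
    finally show "r \<le> cmod \<alpha> * B" .
  qed
  show ?thesis
    using assms(2) by (intro cSup_upper[OF _ bdd]) blast
qed

lemma Sup_Re_rotation_le:
  fixes W :: "complex set"
  assumes "W \<noteq> {}" "bdd_above (cmod ` W)" and bound: "\<And>z. z \<in> W \<Longrightarrow> Re (\<alpha> * z) \<le> B"
  shows "Sup (Re ` (\<lambda>z. \<alpha> * z) ` W) \<le> B"
  using assms(1) bound by (intro cSup_least) auto

lemma lipschitz_Sup_Re_rotation:
  fixes W :: "complex set"
  assumes "W \<noteq> {}" "bdd_above (cmod ` W)"
  shows "(Sup (cmod ` W))-lipschitz_on UNIV (\<lambda>\<alpha>. Sup (Re ` (\<lambda>z. \<alpha> * z) ` W))"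
proof -
  let ?g = "\<lambda>\<alpha>. Sup (Re ` (\<lambda>z. \<alpha> * z) ` W)" and ?s = "Sup (cmod ` W)"
  have one_sided: "?g \<alpha> \<le> ?g \<beta> + cmod (\<alpha> - \<beta>) * ?s" for \<alpha> \<beta>
  proof (rule Sup_Re_rotation_le[OF assms])
    fix z assume "z \<in> W"
    have "cmod z \<le> ?s"
      using \<open>z \<in> W\<close> assms(2) by (intro cSup_upper) auto
    then have "cmod ((\<alpha> - \<beta>) * z) \<le> cmod (\<alpha> - \<beta>) * ?s"
      by (simp add: norm_mult mult_left_mono)
    then have "Re ((\<alpha> - \<beta>) * z) \<le> cmod (\<alpha> - \<beta>) * ?s"
      using complex_Re_le_cmod order_trans by blast
    moreover have "Re (\<beta> * z) \<le> ?g \<beta>"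
      by (rule Re_rotation_le_Sup[OF assms(2) \<open>z \<in> W\<close>])
    moreover have "Re (\<alpha> * z) = Re (\<beta> * z) + Re ((\<alpha> - \<beta>) * z)"
      by (simp add: algebra_simps)
    ultimately show "Re (\<alpha> * z) \<le> ?g \<beta> + cmod (\<alpha> - \<beta>) * ?s"
      by linarith
  qed
  show ?thesis
  proof (rule lipschitz_onI)
    show "dist (?g \<alpha>) (?g \<beta>) \<le> ?s * dist \<alpha> \<beta>" for \<alpha> \<beta>
      using one_sided[of \<alpha> \<beta>] one_sided[of \<beta> \<alpha>]
      by (simp add: dist_real_def dist_norm abs_le_iff norm_minus_commute mult.commute)
    obtain z where "z \<in> W" using assms(1) by blast
    then show "0 \<le> ?s"
      using assms(2) norm_ge_zero[of z] by (meson cSup_upper imageI order_trans)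
  qed
qed

lemma Sup_Re_rotation_le_Sup_cmod:
  fixes W :: "complex set"
  assumes "W \<noteq> {}" "bdd_above (cmod ` W)" "cmod \<alpha> = 1"
  shows "Sup (Re ` (\<lambda>z. \<alpha> * z) ` W) \<le> Sup (cmod ` W)"
proof (rule Sup_Re_rotation_le[OF assms(1,2)])
  fix z assume "z \<in> W"
  then show "Re (\<alpha> * z) \<le> Sup (cmod ` W)"
    using complex_Re_le_cmod[of "\<alpha> * z"] assms(2,3)
    by (auto simp: norm_mult intro: order_trans cSup_upper)
qed

lemma unimodular_rotation_to_cmod:
  fixes z :: complex
  obtains \<alpha> where "cmod \<alpha> = 1" "\<alpha> * z = of_real (cmod z)"
proof (cases "z = 0")
  case False
  have "cnj z / of_real (cmod z) * z = of_real ((cmod z)^2) / of_real (cmod z)"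
    unfolding complex_norm_square by (simp add: mult.commute)
  also have "\<dots> = of_real (cmod z)"
    using False by (simp add: power2_eq_square)
  finally show ?thesis
    using False by (intro that[of "cnj z / of_real (cmod z)"]) (simp_all add: norm_divide)
qed (intro that[of 1], simp_all)

lemma Sup_cmod_attained_by_rotation:
  fixes W :: "complex set"
  assumes "W \<noteq> {}" "bdd_above (cmod ` W)"
  shows "\<exists>\<alpha>. cmod \<alpha> = 1 \<and> Sup (Re ` (\<lambda>z. \<alpha> * z) ` W) = Sup (cmod ` W)"
proof -
  let ?g = "\<lambda>\<alpha>. Sup (Re ` (\<lambda>z. \<alpha> * z) ` W)"
  have "continuous_on (sphere 0 1) ?g"
    using lipschitz_on_continuous_on[OF lipschitz_Sup_Re_rotation[OF assms]]
    by (rule continuous_on_subset) simp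
  then obtain \<alpha>0 where \<alpha>0: "cmod \<alpha>0 = 1" and max: "\<And>\<beta>. cmod \<beta> = 1 \<Longrightarrow> ?g \<beta> \<le> ?g \<alpha>0"
    using continuous_attains_sup[of "sphere (0::complex) 1" ?g] by fastforce
  have "Sup (cmod ` W) \<le> ?g \<alpha>0"
  proof (rule cSup_least)
    fix r assume "r \<in> cmod ` W"
    then obtain z where "z \<in> W" "r = cmod z" by blast
    obtain \<beta> where \<beta>: "cmod \<beta> = 1" "\<beta> * z = of_real (cmod z)"
      by (rule unimodular_rotation_to_cmod)
    have "r = Re (\<beta> * z)" using \<open>r = cmod z\<close> \<beta>(2) by simp
    also have "\<dots> \<le> ?g \<beta>" by (rule Re_rotation_le_Sup[OF assms(2) \<open>z \<in> W\<close>])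
    also have "\<dots> \<le> ?g \<alpha>0" by (rule max[OF \<beta>(1)])
    finally show "r \<le> ?g \<alpha>0" .
  qed (use assms(1) in blast)
  moreover have "?g \<alpha>0 \<le> Sup (cmod ` W)"
    by (rule Sup_Re_rotation_le_Sup_cmod[OF assms \<alpha>0])
  ultimately show ?thesis using \<alpha>0 by (intro exI[of _ \<alpha>0]) simp
qed

lemma complex_structure_cscale:
  assumes "complex_structure J"
  shows linear_cscale: "linear (cscale J \<alpha>)"
    and norm_cscale: "norm (cscale J \<alpha> x) = cmod \<alpha> * norm x"
proof -
  have J: "linear J" using assms unfolding complex_structure_def by blast
  show "linear (cscale J \<alpha>)"
  proof (rule linearI)
    show "cscale J \<alpha> (x + y) = cscale J \<alpha> x + cscale J \<alpha> y" for x y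
      unfolding cscale_def linear_add[OF J] by (simp add: algebra_simps)
    show "cscale J \<alpha> (r *\<^sub>R x) = r *\<^sub>R cscale J \<alpha> x" for r x
      unfolding cscale_def linear_scale[OF J] by (simp add: algebra_simps)
  qed
  show "norm (cscale J \<alpha> x) = cmod \<alpha> * norm x"
    using assms unfolding complex_structure_def by blast
qed

lemma lipschitz_on_cscale:
  assumes "complex_structure J" "C-lipschitz_on U S"
  shows "(cmod \<alpha> * C)-lipschitz_on U (\<lambda>x. cscale J \<alpha> (S x))"
proof (rule lipschitz_onI)
  show "0 \<le> cmod \<alpha> * C" using lipschitz_on_nonneg[OF assms(2)] by simp
next
  fix x y assume "x \<in> U" "y \<in> U"
  have "dist (cscale J \<alpha> (S x)) (cscale J \<alpha> (S y)) = cmod \<alpha> * dist (S x) (S y)"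
    unfolding dist_norm linear_diff[OF linear_cscale[OF assms(1)], symmetric] norm_cscale[OF assms(1)] ..
  also have "\<dots> \<le> cmod \<alpha> * (C * dist x y)"
    using lipschitz_onD[OF assms(2) \<open>x \<in> U\<close> \<open>y \<in> U\<close>] by (simp add: mult_left_mono)
  finally show "dist (cscale J \<alpha> (S x)) (cscale J \<alpha> (S y)) \<le> cmod \<alpha> * C * dist x y"
    by (simp add: mult.assoc)
qed

lemma complex_linear_cscale:
  assumes "linear f" "\<And>x. f (J x) = \<i> * f x"
  shows "f (cscale J \<alpha> v) = \<alpha> * f v"
proof -
  have "f (cscale J \<alpha> v) = (of_real (Re \<alpha>) + \<i> * of_real (Im \<alpha>)) * f v"
    unfolding cscale_def linear_add[OF assms(1)] linear_scale[OF assms(1)] assms(2)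
    by (simp add: scaleR_conv_of_real algebra_simps)
  also have "of_real (Re \<alpha>) + \<i> * of_real (Im \<alpha>) = \<alpha>"
    by (simp add: complex_eq_iff)
  finally show ?thesis .
qed

lemma cmod_le_of_Re_le:
  assumes J: "complex_structure J" and F: "\<And>\<alpha> v. F (cscale J \<alpha> v) = \<alpha> * F v"
    and Re_le: "\<And>v. Re (F v) \<le> K * norm v"
  shows "cmod (F z) \<le> K * norm z"
proof -
  obtain \<alpha> where \<alpha>: "cmod \<alpha> = 1" "\<alpha> * F z = of_real (cmod (F z))"
    by (rule unimodular_rotation_to_cmod)
  have "cmod (F z) = Re (F (cscale J \<alpha> z))" using F \<alpha>(2) by simp
  also have "\<dots> \<le> K * norm (cscale J \<alpha> z)" by (rule Re_le)
  also have "norm (cscale J \<alpha> z) = norm z" using norm_cscale[OF J] \<alpha>(1) by simp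
  finally show ?thesis .
qed

lemma DC_properties:
  assumes "w \<noteq> 0" "f \<in> DC J w"
  shows DC_cdual: "cdual J f" and DC_apply_self: "f w = of_real ((norm w)^2)"
    and DC_cmod_le: "cmod (f z) \<le> norm w * norm z"
proof -
  have cd: "cdual J f" and "f w = of_real (onorm f * norm w)" "onorm f * norm w = (norm w)^2"
    using assms(2) unfolding DC_def by blast+
  moreover have "onorm f = norm w"
    using calculation(3) assms(1) by (simp add: power2_eq_square)
  moreover have "bounded_linear f" using cd unfolding cdual_def by blast
  ultimately show "cdual J f" "f w = of_real ((norm w)^2)" "cmod (f z) \<le> norm w * norm z"
    using onorm[of f z] by (auto simp: power2_eq_square)
qed

lemma DC_I:
  assumes cd: "cdual J f" and self: "f w = of_real ((norm w)^2)"
    and le: "\<And>z. cmod (f z) \<le> norm w * norm z"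
  shows "f \<in> DC J w"
proof -
  have bl: "bounded_linear f" using cd unfolding cdual_def by blast
  have "onorm f \<le> norm w"
    using le by (intro onorm_bound) auto
  then have "onorm f * norm w \<le> (norm w)^2"
    by (simp add: power2_eq_square mult_right_mono)
  moreover have "(norm w)^2 \<le> onorm f * norm w"
    using onorm[OF bl, of w] self by (simp add: norm_power)
  ultimately have eq: "onorm f * norm w = (norm w)^2" by linarith
  have "f w = of_real (onorm f * norm w)"
    unfolding eq by (rule self)
  then show ?thesis
    unfolding DC_def using cd eq by blast
qed

lemma Re_DC_in_DR:
  assumes "w \<noteq> 0" "f \<in> DC J w"
  shows "(\<lambda>z. Re (f z)) \<in> DR w"
proof (rule DR_I)
  have "bounded_linear f" using DC_cdual[OF assms] unfolding cdual_def by blast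
  then show "linear (\<lambda>z. Re (f z))"
    using bounded_linear_compose[OF bounded_linear_Re] bounded_linear.linear by blast
  show "Re (f w) = (norm w)^2" using DC_apply_self[OF assms] by simp
  show "Re (f z) \<le> norm w * norm z" for z
    using complex_Re_le_cmod[of "f z"] DC_cmod_le[OF assms, of z] by linarith
qed

lemma complexification_in_DC:
  assumes J: "complex_structure J" and w: "w \<noteq> 0" and \<phi>: "\<phi> \<in> DR w"
  shows "(\<lambda>z. Complex (\<phi> z) (- \<phi> (J z))) \<in> DC J w" (is "?F \<in> _")
proof (rule DC_I)
  have lin\<phi>: "linear \<phi>" using DR_linear[OF w \<phi>] .
  have linJ: "linear J" and JJ: "\<And>x. J (J x) = - x"
    using J unfolding complex_structure_def by blast+
  have linF: "linear ?F"
    by (intro linearI) (simp_all add: linear_add[OF lin\<phi>] linear_add[OF linJ]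
        linear_scale[OF lin\<phi>] linear_scale[OF linJ] complex_eq_iff)
  have FJ: "?F (J x) = \<i> * ?F x" for x
    using linear_neg[OF lin\<phi>] by (simp add: JJ complex_eq_iff)
  have le: "cmod (?F z) \<le> norm w * norm z" for z
    using cmod_le_of_Re_le[OF J complex_linear_cscale[OF linF FJ]] DR_le[OF w \<phi>] by simp
  have "bounded_linear ?F"
    by (rule bounded_linear_intro[where K = "norm w"])
      (use linear_add[OF linF] linear_scale[OF linF] le in \<open>simp_all add: mult.commute\<close>)
  then show "cdual J ?F"
    unfolding cdual_def using FJ by blast
  show "cmod (?F z) \<le> norm w * norm z" for z by (rule le)
  have "(cmod (?F w))^2 \<le> ((norm w)^2)^2"
    using le[of w] by (intro power_mono) (auto simp: power2_eq_square)
  then have "(\<phi> w)^2 + (\<phi> (J w))^2 \<le> ((norm w)^2)^2"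
    by (simp add: cmod_power2)
  then show "?F w = of_real ((norm w)^2)"
    using DR_apply_self[OF w \<phi>] by (simp add: complex_eq_iff)
qed

lemma Re_WC_eq_WR:
  assumes J: "complex_structure J"
  shows "Re ` WC J S = WR S"
proof (intro set_eqI iffI)
  fix r assume "r \<in> Re ` WC J S"
  then obtain x y f where r: "r = Re (f (S x - S y) / of_real ((norm (x - y))^2))"
    and xy: "x \<noteq> y" and f: "f \<in> DC J (x - y)"
    unfolding WC_def by blast
  have "(\<lambda>z. Re (f z)) \<in> DR (x - y)"
    using Re_DC_in_DR[OF _ f] xy by simp
  moreover have "r = Re (f (S x - S y)) / (norm (x - y))^2"
    using r by simp
  ultimately show "r \<in> WR S"
    unfolding WR_def using xy by (intro CollectI exI[of _ x] exI[of _ y] exI[of _ "\<lambda>z. Re (f z)"]) simp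
next
  fix r assume "r \<in> WR S"
  then obtain x y \<phi> where r: "r = \<phi> (S x - S y) / (norm (x - y))^2"
    and xy: "x \<noteq> y" and \<phi>: "\<phi> \<in> DR (x - y)"
    unfolding WR_def by blast
  define F where "F z = Complex (\<phi> z) (- \<phi> (J z))" for z
  have "F \<in> DC J (x - y)"
    unfolding F_def using complexification_in_DC[OF J _ \<phi>] xy by simp
  then have "F (S x - S y) / of_real ((norm (x - y))^2) \<in> WC J S"
    unfolding WC_def using xy by blast
  moreover have "Re (F (S x - S y) / of_real ((norm (x - y))^2)) = r"
    unfolding r F_def by simp
  ultimately show "r \<in> Re ` WC J S" by force
qed

lemma WC_cscale:
  assumes J: "complex_structure J"
  shows "WC J (\<lambda>x. cscale J \<alpha> (S x)) = (\<lambda>z. \<alpha> * z) ` WC J S"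
proof -
  have scale: "f (cscale J \<alpha> (S x) - cscale J \<alpha> (S y)) = \<alpha> * f (S x - S y)"
    if "f \<in> DC J (x - y)" for x y f
  proof -
    have "cdual J f" using that unfolding DC_def by blast
    then have "linear f" "\<And>z. f (J z) = \<i> * f z"
      unfolding cdual_def using bounded_linear.linear by blast+
    then show ?thesis
      unfolding linear_diff[OF linear_cscale[OF J], symmetric] by (rule complex_linear_cscale)
  qed
  show ?thesis
  proof (intro set_eqI iffI)
    fix s assume "s \<in> WC J (\<lambda>x. cscale J \<alpha> (S x))"
    then obtain x y f where s: "s = f (cscale J \<alpha> (S x) - cscale J \<alpha> (S y)) / of_real ((norm (x - y))^2)"
      and xyf: "x \<noteq> y" "f \<in> DC J (x - y)"
      unfolding WC_def by blast
    then have "f (S x - S y) / of_real ((norm (x - y))^2) \<in> WC J S"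
      unfolding WC_def by blast
    then show "s \<in> (\<lambda>z. \<alpha> * z) ` WC J S"
      unfolding s scale[OF xyf(2)] by force
  next
    fix s assume "s \<in> (\<lambda>z. \<alpha> * z) ` WC J S"
    then obtain x y f where s: "s = \<alpha> * (f (S x - S y) / of_real ((norm (x - y))^2))"
      and xyf: "x \<noteq> y" "f \<in> DC J (x - y)"
      unfolding WC_def by blast
    then have "s = f (cscale J \<alpha> (S x) - cscale J \<alpha> (S y)) / of_real ((norm (x - y))^2)"
      using scale[OF xyf(2)] by simp
    then show "s \<in> WC J (\<lambda>x. cscale J \<alpha> (S x))"
      unfolding WC_def using xyf by blast
  qed
qed

lemma WC_cmod_le:
  assumes L: "L-lipschitz_on UNIV S" and "z \<in> WC J S"
  shows "cmod z \<le> L"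
proof -
  obtain x y f where z: "z = f (S x - S y) / of_real ((norm (x - y))^2)"
    and xy: "x - y \<noteq> 0" and f: "f \<in> DC J (x - y)"
    using assms(2) unfolding WC_def by auto
  have "cmod (f (S x - S y)) \<le> norm (x - y) * norm (S x - S y)"
    by (rule DC_cmod_le[OF xy f])
  also have "\<dots> \<le> norm (x - y) * (L * norm (x - y))"
    using lipschitz_on_normD[OF L] by (intro mult_left_mono) auto
  finally show ?thesis
    using xy unfolding z by (simp add: norm_divide divide_le_eq power2_eq_square norm_mult mult_ac)
qed

lemma numerical_radius_real:
  fixes T :: "'a::real_normed_vector \<Rightarrow> 'a"
  assumes L: "L-lipschitz_on UNIV T" and nz: "\<exists>x::'a. x \<noteq> 0"
  shows "\<exists>g. (\<forall>\<alpha>::real. \<bar>\<alpha>\<bar> = 1 \<longrightarrow>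
              ((\<lambda>t. (Lip_norm (\<lambda>x. x + t *\<^sub>R (\<alpha> *\<^sub>R T x)) - 1) / t) \<longlongrightarrow> g \<alpha>) (at_right 0)) \<and>
           (\<exists>\<alpha>. \<bar>\<alpha>\<bar> = 1 \<and> g \<alpha> = omegaR T) \<and>
           (\<forall>\<alpha>. \<bar>\<alpha>\<bar> = 1 \<longrightarrow> g \<alpha> \<le> omegaR T)"
proof (rule exI, intro conjI)
  let ?g = "\<lambda>\<alpha>. Sup ((\<lambda>r. \<alpha> * r) ` WR T)"
  have W: "WR T \<noteq> {}" "bdd_above (abs ` WR T)"
    using WR_nonempty[OF nz] WR_abs_le[OF L] by (auto intro!: bdd_aboveI[of _ L])
  show "\<forall>\<alpha>. \<bar>\<alpha>\<bar> = 1 \<longrightarrow> ((\<lambda>t. (Lip_norm (\<lambda>x. x + t *\<^sub>R (\<alpha> *\<^sub>R T x)) - 1) / t) \<longlongrightarrow> ?g \<alpha>) (at_right 0)"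
    using tendsto_Lip_norm_quotient_Sup_WR[OF lipschitz_on_cmult[OF L] nz] by (simp add: WR_scaleR)
  show "\<exists>\<alpha>. \<bar>\<alpha>\<bar> = 1 \<and> ?g \<alpha> = omegaR T"
    unfolding omegaR_def by (rule Sup_abs_attained_by_reflection[OF W])
  show "\<forall>\<alpha>. \<bar>\<alpha>\<bar> = 1 \<longrightarrow> ?g \<alpha> \<le> omegaR T"
    unfolding omegaR_def using Sup_reflections_le_Sup_abs[OF W] by blast
qed

lemma numerical_radius_complex:
  fixes S :: "'a::real_normed_vector \<Rightarrow> 'a"
  assumes J: "complex_structure J" and L: "L-lipschitz_on UNIV S" and nz: "\<exists>x::'a. x \<noteq> 0"
  shows "\<exists>g. (\<forall>\<alpha>::complex. cmod \<alpha> = 1 \<longrightarrow>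
              ((\<lambda>t. (Lip_norm (\<lambda>x. x + t *\<^sub>R cscale J \<alpha> (S x)) - 1) / t) \<longlongrightarrow> g \<alpha>) (at_right 0)) \<and>
           (\<exists>\<alpha>. cmod \<alpha> = 1 \<and> g \<alpha> = omegaC J S) \<and>
           (\<forall>\<alpha>. cmod \<alpha> = 1 \<longrightarrow> g \<alpha> \<le> omegaC J S)"
proof (rule exI, intro conjI)
  let ?g = "\<lambda>\<alpha>. Sup (Re ` (\<lambda>z. \<alpha> * z) ` WC J S)"
  have "Re ` WC J S \<noteq> {}"
    unfolding Re_WC_eq_WR[OF J] by (rule WR_nonempty[OF nz])
  then have W: "WC J S \<noteq> {}" "bdd_above (cmod ` WC J S)"
    using WC_cmod_le[OF L] by (auto intro!: bdd_aboveI[of _ L])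
  show "\<forall>\<alpha>. cmod \<alpha> = 1 \<longrightarrow> ((\<lambda>t. (Lip_norm (\<lambda>x. x + t *\<^sub>R cscale J \<alpha> (S x)) - 1) / t) \<longlongrightarrow> ?g \<alpha>) (at_right 0)"
    using tendsto_Lip_norm_quotient_Sup_WR[OF lipschitz_on_cscale[OF J L] nz]
    by (simp add: Re_WC_eq_WR[OF J, symmetric] WC_cscale[OF J])
  show "\<exists>\<alpha>. cmod \<alpha> = 1 \<and> ?g \<alpha> = omegaC J S"
    unfolding omegaC_def by (rule Sup_cmod_attained_by_rotation[OF W])
  show "\<forall>\<alpha>. cmod \<alpha> = 1 \<longrightarrow> ?g \<alpha> \<le> omegaC J S"
    unfolding omegaC_def using Sup_Re_rotation_le_Sup_cmod[OF W] by blast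
qed

theorem theorem2p1:
  fixes T :: "'a::banach \<Rightarrow> 'a"
    and J :: "'b::banach \<Rightarrow> 'b" and S :: "'b \<Rightarrow> 'b"
  shows
   "(Lip0 T \<and> (\<exists>x::'a. x \<noteq> 0) \<longrightarrow>
      ((\<lambda>t. (Lip_norm (\<lambda>x. x + t *\<^sub>R T x) - 1) / t) \<longlongrightarrow> Sup (WR T)) (at_right 0) \<and>
      (\<exists>g. (\<forall>\<alpha>::real. \<bar>\<alpha>\<bar> = 1 \<longrightarrow>
              ((\<lambda>t. (Lip_norm (\<lambda>x. x + t *\<^sub>R (\<alpha> *\<^sub>R T x)) - 1) / t) \<longlongrightarrow> g \<alpha>) (at_right 0)) \<and>
           (\<exists>\<alpha>. \<bar>\<alpha>\<bar> = 1 \<and> g \<alpha> = omegaR T) \<and>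
           (\<forall>\<alpha>. \<bar>\<alpha>\<bar> = 1 \<longrightarrow> g \<alpha> \<le> omegaR T)))
    \<and>
    (complex_structure J \<and> Lip0 S \<and> (\<exists>x::'b. x \<noteq> 0) \<longrightarrow>
      ((\<lambda>t. (Lip_norm (\<lambda>x. x + t *\<^sub>R S x) - 1) / t) \<longlongrightarrow> Sup (Re ` WC J S)) (at_right 0) \<and>
      (\<exists>g. (\<forall>\<alpha>::complex. cmod \<alpha> = 1 \<longrightarrow>
              ((\<lambda>t. (Lip_norm (\<lambda>x. x + t *\<^sub>R cscale J \<alpha> (S x)) - 1) / t) \<longlongrightarrow> g \<alpha>) (at_right 0)) \<and>
           (\<exists>\<alpha>. cmod \<alpha> = 1 \<and> g \<alpha> = omegaC J S) \<and>
           (\<forall>\<alpha>. cmod \<alpha> = 1 \<longrightarrow> g \<alpha> \<le> omegaC J S)))"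
proof (intro conjI impI, goal_cases)
  case 1
  then obtain L where "L-lipschitz_on UNIV T" "\<exists>x::'a. x \<noteq> 0" unfolding Lip0_def by blast
  then show ?case by (rule tendsto_Lip_norm_quotient_Sup_WR)
next
  case 2
  then obtain L where "L-lipschitz_on UNIV T" "\<exists>x::'a. x \<noteq> 0" unfolding Lip0_def by blast
  then show ?case by (rule numerical_radius_real)
next
  case 3
  then obtain L where J: "complex_structure J" and L: "L-lipschitz_on UNIV S"
    and nz: "\<exists>x::'b. x \<noteq> 0"
    unfolding Lip0_def by blast
  show ?case
    unfolding Re_WC_eq_WR[OF J] by (rule tendsto_Lip_norm_quotient_Sup_WR[OF L nz])
next
  case 4
  then obtain L where "complex_structure J" "L-lipschitz_on UNIV S" "\<exists>x::'b. x \<noteq> 0"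
    unfolding Lip0_def by blast
  then show ?case by (rule numerical_radius_complex)
qed

end
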